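(* Consider any JPLT-I protocol. For every realization $\mathrm{Q}$ of the query $Q$ occurring with positive probability and every $\tilde W\in\mathbb{W}$, there exists $\tilde V\in\mathbb{V}_I$ such that $H\big(Z^{[\tilde W,\tilde V]}\mid A,\,Q=\mathrm{Q}\big)=0$, i.e., conditioned on $Q=\mathrm{Q}$, the matrix $Z^{[\tilde W,\tilde V]}=\tilde V X_{\tilde W}$ is a deterministic function of the answer $A$.
   Context: Setup. Let $q$ be a prime power, $N\ge 1$ an integer, $B=N\log_2 q$, and $1\le L\le D\le K$ integers. Let $\mathbb{W}$ be the set of all $D$-element subsets of $[K]=\{1,\dots,K\}$. Let $\mathbb{V}_I$ be the set of $L\times D$ matrices over $\mathbb{F}_q$ that are MDS (every $L\times L$ submatrix is invertible), and $\mathbb{V}_{II}$ the set of $L\times D$ matrices over $\mathbb{F}_q$ of rank $L$. A server stores messages $X_1,\dots,X_K\in\mathbb{F}_q^N$ (row vectors), which are independent and uniformly distributed; $X$ denotes the $K\times N$ matrix with rows $X_1,\dots,X_K$, and for $S\subseteq[K]$, $X_S$ is the submatrix of rows indexed by $S$ (in increasing order). For $W\in\mathbb{W}$ and an $L\times D$ matrix $V$, the demand is $Z^{[W,V]}=VX_W=UX$, where the global coefficient matrix $U$ is the $L\times K$ matrix whose columns indexed by $W$ (in increasing order) are the columns of $V$ and whose other columns are zero. The demand support $W$ is uniform on $\mathbb{W}$; the coefficient matrix $V$ is uniform on $\mathbb{V}_I$ (Model I) or on $\mathbb{V}_{II}$ (Model II); $W,V,X$ are mutually independent. The server knows $K,D,L$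 and these distributions but not the realizations of $W,V$. Protocol. The user draws private randomness $R$ independent of $(W,V,X)$ and sends a query $Q=Q^{[W,V]}$ that is a function of $(W,V,R)$; the server returns an answer $A=A^{[W,V]}$ that is a deterministic function of $(Q,X)$. Recoverability: $H(Z^{[W,V]}\mid A,Q,W,V)=0$. Joint privacy: for every realization $\mathrm{Q}$ of the query with positive probability and every $\tilde W\in\mathbb{W}$, $\Pr(W=\tilde W\mid Q=\mathrm{Q})=1/\binom{K}{D}$. A JPLT-I (resp. JPLT-II) protocol is a protocol satisfying recoverability and joint privacy under Model I (resp. Model II). The rate of a protocol is $H(Z^{[W,V]})/H(A)=LB/H(A)$. *)

theory Defs
  imports "Jordan_Normal_Form.DL_Submatrix" "HOL-Probability.Probability_Mass_Function"
    "HOL-Analysis.Infinite_Sum"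
begin

definition cond_entropy :: "('z \<times> 'y) pmf \<Rightarrow> real" where
  "cond_entropy P = (\<Sum>\<^sub>\<infinity>zy\<in>set_pmf P. pmf P zy * log 2 (pmf (map_pmf snd P) (snd zy) / pmf P zy))"

definition supports :: "nat \<Rightarrow> nat \<Rightarrow> nat set set" where
  "supports K D = {S. S \<subseteq> {0..<K} \<and> card S = D}"

definition MDS_mats :: "nat \<Rightarrow> nat \<Rightarrow> ('f::field) mat set" where
  "MDS_mats L D = {V \<in> carrier_mat L D.
       \<forall>C. C \<subseteq> {0..<D} \<longrightarrow> card C = L \<longrightarrow> invertible_mat (submatrix V {0..<L} C)}"

(* Demand Z^[W,V] = V X_W, with X_W the rows of X indexed by W in increasing order. *)
definition demand :: "nat set \<Rightarrow> ('f::field) mat \<Rightarrow> 'f mat \<Rightarrow> 'f mat" where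
  "demand W V X = V * submatrix X W {0..<dim_col X}"

definition jplt1_joint :: "nat \<Rightarrow> nat \<Rightarrow> nat \<Rightarrow> nat \<Rightarrow> 'r pmf
      \<Rightarrow> (nat set \<times> ('f::{finite,field}) mat \<times> 'r \<times> 'f mat) pmf" where
  "jplt1_joint K N D L rho =
     do { w \<leftarrow> pmf_of_set (supports K D);
          v \<leftarrow> pmf_of_set (MDS_mats L D);
          r \<leftarrow> rho;
          x \<leftarrow> pmf_of_set (carrier_mat K N);
          return_pmf (w, v, r, x) }"

definition JPLT_I_protocol :: "nat \<Rightarrow> nat \<Rightarrow> nat \<Rightarrow> nat \<Rightarrow> 'r pmf
      \<Rightarrow> (nat set \<Rightarrow> ('f::{finite,field}) mat \<Rightarrow> 'r \<Rightarrow> 'q) \<Rightarrow> ('q \<Rightarrow> 'f mat \<Rightarrow> 'a) \<Rightarrow> bool" where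
  "JPLT_I_protocol K N D L rho query answer \<longleftrightarrow>
     (let P = jplt1_joint K N D L rho in
      \<comment> \<open>recoverability: H(Z^[W,V] | A, Q, W, V) = 0\<close>
      cond_entropy (map_pmf (\<lambda>(w,v,r,x). (demand w v x, (answer (query w v r) x, query w v r, w, v))) P) = 0
      \<and>
      \<comment> \<open>joint privacy\<close>
      (\<forall>qq Wt. measure_pmf.prob P {(w,v,r,x). query w v r = qq} > 0 \<longrightarrow> Wt \<in> supports K D \<longrightarrow>
          measure_pmf.prob P {(w,v,r,x). w = Wt \<and> query w v r = qq}
            / measure_pmf.prob P {(w,v,r,x). query w v r = qq} = 1 / real (K choose D)))"

end

theory Submission
  imports Defs
begin

text \<open>
  Joint privacy says that the realized query qq occurs with every support Wt with probability
  1 / (K choose D) > 0, so qq = query Wt Vt r for some MDS matrix Vt and some randomness r.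
  Recoverability, a vanishing conditional entropy, says that on the support of the joint
  distribution the demand is a function of (A, Q, W, V). Fixing Q = qq, W = Wt, V = Vt, the
  answer therefore determines Vt X_Wt for every message matrix X; as X ranges over all matrices
  independently of the query, this functional dependence persists after conditioning on Q = qq.
\<close>

definition cond_entropy_summand :: "('z \<times> 'y) pmf \<Rightarrow> 'z \<times> 'y \<Rightarrow> real" where
  "cond_entropy_summand P zy = pmf P zy * log 2 (pmf (map_pmf snd P) (snd zy) / pmf P zy)"

lemma cond_entropy_eq_infsum_summand:
  "cond_entropy P = infsum (cond_entropy_summand P) (set_pmf P)"
  unfolding cond_entropy_def cond_entropy_summand_def ..

lemma pmf_le_pmf_map_snd: "pmf P zy \<le> pmf (map_pmf snd P) (snd zy)"
proof -
  have "measure P {zy} \<le> measure P (snd -` {snd zy})"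
    by (rule measure_pmf.finite_measure_mono) auto
  then show ?thesis
    by (simp add: pmf_map measure_pmf_single)
qed

lemma pmf_map_snd_eq_pmf_iff:
  assumes a: "a \<in> set_pmf P"
  shows "pmf (map_pmf snd P) (snd a) = pmf P a \<longleftrightarrow> (\<forall>b\<in>set_pmf P. snd b = snd a \<longrightarrow> b = a)"
proof
  assume eq: "pmf (map_pmf snd P) (snd a) = pmf P a"
  show "\<forall>b\<in>set_pmf P. snd b = snd a \<longrightarrow> b = a"
  proof (intro ballI impI)
    fix b assume b: "b \<in> set_pmf P" and snd_b: "snd b = snd a"
    show "b = a"
    proof (rule ccontr)
      assume "b \<noteq> a"
      then have "pmf P a + pmf P b = measure P {a, b}"
        by (simp add: measure_measure_pmf_finite)
      also have "\<dots> \<le> pmf (map_pmf snd P) (snd a)"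
        unfolding pmf_map using snd_b by (intro measure_pmf.finite_measure_mono) auto
      finally show False
        using eq b by (simp add: set_pmf_iff)
    qed
  qed
next
  assume unique: "\<forall>b\<in>set_pmf P. snd b = snd a \<longrightarrow> b = a"
  have "pmf (map_pmf snd P) (snd a) = measure P (snd -` {snd a} \<inter> set_pmf P)"
    by (simp add: pmf_map measure_Int_set_pmf)
  also have "snd -` {snd a} \<inter> set_pmf P = {a}"
    using unique a by blast
  finally show "pmf (map_pmf snd P) (snd a) = pmf P a"
    by (simp add: measure_pmf_single)
qed

lemma cond_entropy_summand_nonneg: "0 \<le> cond_entropy_summand P zy"
proof (cases "pmf P zy = 0")
  case False
  then have "1 \<le> pmf (map_pmf snd P) (snd zy) / pmf P zy"
    using pmf_le_pmf_map_snd[of P zy] by (simp add: pmf_nonneg order_less_le)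
  then show ?thesis
    unfolding cond_entropy_summand_def by simp
qed (simp add: cond_entropy_summand_def)

lemma log_eq_0_iff: "1 < (b::real) \<Longrightarrow> 0 < x \<Longrightarrow> log b x = 0 \<longleftrightarrow> x = 1"
  by (smt (verit, best) log_le_zero_cancel_iff zero_le_log_cancel_iff)

lemma cond_entropy_summand_eq_0_iff:
  assumes "zy \<in> set_pmf P"
  shows "cond_entropy_summand P zy = 0 \<longleftrightarrow> pmf (map_pmf snd P) (snd zy) = pmf P zy"
proof -
  define p q where "p = pmf P zy" and "q = pmf (map_pmf snd P) (snd zy)"
  have p: "0 < p"
    using assms by (simp add: p_def pmf_positive)
  then have "0 < q / p"
    using pmf_le_pmf_map_snd[of P zy] by (simp add: p_def q_def)
  then have "cond_entropy_summand P zy = 0 \<longleftrightarrow> q / p = 1"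
    using p by (simp add: cond_entropy_summand_def log_eq_0_iff flip: p_def q_def)
  then show ?thesis
    using p by (auto simp flip: p_def q_def)
qed

lemma cond_entropy_summand_le: "cond_entropy_summand P zy \<le> pmf (map_pmf snd P) (snd zy) / ln 2"
proof (cases "pmf P zy = 0")
  case False
  define p q where "p = pmf P zy" and "q = pmf (map_pmf snd P) (snd zy)"
  have p: "0 < p" using False by (simp add: p_def pmf_nonneg order_less_le)
  have q: "0 < q" using p pmf_le_pmf_map_snd[of P zy] by (simp add: p_def q_def)
  have "p * ln (q / p) \<le> p * (q / p - 1)"
    using p q by (intro mult_left_mono ln_le_minus_one) auto
  also have "\<dots> \<le> q" using p by (simp add: field_simps)
  finally show ?thesis
    unfolding cond_entropy_summand_def log_def p_def[symmetric] q_def[symmetric]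
    by (simp add: divide_right_mono)
qed (simp add: cond_entropy_summand_def)

lemma summable_cond_entropy_summand:
  assumes fin: "finite (fst ` set_pmf P)"
  shows "cond_entropy_summand P summable_on set_pmf P"
proof (rule nonneg_bdd_above_summable_on)
  show "0 \<le> cond_entropy_summand P zy" for zy
    by (rule cond_entropy_summand_nonneg)
  show "bdd_above (sum (cond_entropy_summand P) ` {F. F \<subseteq> set_pmf P \<and> finite F})"
  proof (rule bdd_aboveI2)
    fix F assume "F \<in> {F. F \<subseteq> set_pmf P \<and> finite F}"
    then have F: "F \<subseteq> set_pmf P" "finite F" by auto
    let ?Zs = "fst ` set_pmf P" and ?q = "\<lambda>y. pmf (map_pmf snd P) y / ln 2"
    have "sum (cond_entropy_summand P) F \<le> (\<Sum>zy\<in>F. ?q (snd zy))"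
      by (intro sum_mono cond_entropy_summand_le)
    also have "\<dots> \<le> (\<Sum>zy\<in>?Zs \<times> snd ` F. ?q (snd zy))"
    proof (rule sum_mono2)
      show "F \<subseteq> ?Zs \<times> snd ` F"
        using F(1) by force
    qed (use F(2) fin in auto)
    also have "\<dots> = (\<Sum>z\<in>?Zs. \<Sum>y\<in>snd ` F. ?q y)"
      unfolding sum.cartesian_product by (simp add: split_def)
    also have "\<dots> \<le> (\<Sum>z\<in>?Zs. 1 / ln 2)"
    proof (rule sum_mono)
      have "(\<Sum>y\<in>snd ` F. ?q y) = measure (map_pmf snd P) (snd ` F) / ln 2"
        unfolding sum_divide_distrib[symmetric] using F(2)
        by (simp only: measure_measure_pmf_finite finite_imageI)
      also have "\<dots> \<le> 1 / ln 2"
        by (intro divide_right_mono measure_pmf.prob_le_1) simp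
      finally show "(\<Sum>y\<in>snd ` F. ?q y) \<le> 1 / ln 2" .
    qed
    finally show "sum (cond_entropy_summand P) F \<le> (\<Sum>z\<in>?Zs. 1 / ln 2)" .
  qed
qed

lemma cond_entropy_eq_0_if_fst_determined:
  assumes "\<And>a b. a \<in> set_pmf P \<Longrightarrow> b \<in> set_pmf P \<Longrightarrow> snd a = snd b \<Longrightarrow> fst a = fst b"
  shows "cond_entropy P = 0"
proof -
  have "cond_entropy_summand P a = 0" if a: "a \<in> set_pmf P" for a
  proof -
    have "\<forall>b\<in>set_pmf P. snd b = snd a \<longrightarrow> b = a"
      using assms a by (metis prod_eqI)
    then show ?thesis
      using a by (simp add: cond_entropy_summand_eq_0_iff pmf_map_snd_eq_pmf_iff)
  qed
  then show ?thesis
    unfolding cond_entropy_eq_infsum_summand by (rule infsum_0)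
qed

lemma fst_determined_if_cond_entropy_eq_0:
  assumes "finite (fst ` set_pmf P)" and "cond_entropy P = 0"
    and "a \<in> set_pmf P" "b \<in> set_pmf P" "snd a = snd b"
  shows "fst a = fst b"
proof -
  have "cond_entropy_summand P a = 0"
    using assms(2,3) summable_cond_entropy_summand[OF assms(1)] cond_entropy_summand_nonneg
    unfolding cond_entropy_eq_infsum_summand by (intro nonneg_infsum_le_0D) auto
  then have "\<forall>b'\<in>set_pmf P. snd b' = snd a \<longrightarrow> b' = a"
    using assms(3) cond_entropy_summand_eq_0_iff pmf_map_snd_eq_pmf_iff by metis
  then show ?thesis
    using assms(4,5) by simp
qed

lemma finite_carrier_mat: "finite (carrier_mat n m :: 'f::finite mat set)"
proof -
  let ?I = "{0..<n} \<times> {0..<m}"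
  have "carrier_mat n m \<subseteq> (\<lambda>f. Matrix.mat n m f) ` (PiE ?I (\<lambda>_. UNIV :: 'f set))"
  proof
    fix A :: "'f mat" assume A: "A \<in> carrier_mat n m"
    then have "A = Matrix.mat n m (restrict (($$) A) ?I)"
      by (intro eq_matI) auto
    moreover have "restrict (($$) A) ?I \<in> PiE ?I (\<lambda>_. UNIV)"
      by auto
    ultimately show "A \<in> (\<lambda>f. Matrix.mat n m f) ` (PiE ?I (\<lambda>_. UNIV))"
      by (rule image_eqI)
  qed
  moreover have "finite (PiE ?I (\<lambda>_. UNIV :: 'f set))"
    by (intro finite_PiE) auto
  ultimately show ?thesis
    using finite_surj by blast
qed

lemma finite_supports: "finite (supports K D)"
  unfolding supports_def by (rule finite_subset[of _ "Pow {0..<K}"]) auto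

lemma finite_MDS_mats: "finite (MDS_mats L D :: 'f::{finite,field} mat set)"
  unfolding MDS_mats_def by (rule finite_subset[OF _ finite_carrier_mat[of L D]]) auto

lemma set_pmf_jplt1_joint:
  assumes "supports K D \<noteq> {}" and "MDS_mats L D \<noteq> ({} :: 'f::{finite,field} mat set)"
  shows "set_pmf (jplt1_joint K N D L rho :: (nat set \<times> 'f mat \<times> 'r \<times> 'f mat) pmf)
           = supports K D \<times> MDS_mats L D \<times> set_pmf rho \<times> carrier_mat K N"
proof -
  have "carrier_mat K N \<noteq> ({} :: 'f mat set)"
    using zero_carrier_mat by blast
  with assms show ?thesis
    unfolding jplt1_joint_def
    by (auto simp: set_bind_pmf set_pmf_of_set finite_supports finite_MDS_mats finite_carrier_mat)
qed

lemma JPLT_I_query_producible_with_support: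
  fixes query :: "nat set \<Rightarrow> ('f::{finite,field}) mat \<Rightarrow> 'r \<Rightarrow> 'q"
  assumes prot: "JPLT_I_protocol K N D L rho query answer" and "D \<le> K"
    and "MDS_mats L D \<noteq> ({} :: 'f mat set)"
    and pos: "measure_pmf.prob (jplt1_joint K N D L rho) {(w,v,r,x). query w v r = qq} > 0"
    and Wt: "Wt \<in> supports K D"
  obtains v r where "v \<in> MDS_mats L D" "r \<in> set_pmf rho" "query Wt v r = qq"
proof -
  let ?P = "jplt1_joint K N D L rho :: (nat set \<times> 'f mat \<times> 'r \<times> 'f mat) pmf"
  have "measure_pmf.prob ?P {(w,v,r,x). w = Wt \<and> query w v r = qq}
          / measure_pmf.prob ?P {(w,v,r,x). query w v r = qq} = 1 / real (K choose D)"
    using prot pos Wt unfolding JPLT_I_protocol_def Let_def by blast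
  moreover have "0 < real (K choose D)"
    using \<open>D \<le> K\<close> by simp
  ultimately have "measure_pmf.prob ?P {(w,v,r,x). w = Wt \<and> query w v r = qq} \<noteq> 0"
    by auto
  then obtain v r x where "(Wt, v, r, x) \<in> set_pmf ?P" "query Wt v r = qq"
    by (auto simp: measure_pmf_zero_iff)
  with that show ?thesis
    using assms(3) Wt set_pmf_jplt1_joint by blast
qed

lemma JPLT_I_answer_determines_demand:
  fixes query :: "nat set \<Rightarrow> ('f::{finite,field}) mat \<Rightarrow> 'r \<Rightarrow> 'q"
  assumes prot: "JPLT_I_protocol K N D L rho query answer"
    and "w \<in> supports K D" "v \<in> MDS_mats L D" "r \<in> set_pmf rho"
    and "x \<in> carrier_mat K N" "x' \<in> carrier_mat K N"
    and "answer (query w v r) x = answer (query w v r) x'"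
  shows "demand w v x = demand w v x'"
proof -
  let ?P = "jplt1_joint K N D L rho :: (nat set \<times> 'f mat \<times> 'r \<times> 'f mat) pmf"
  define g where "g = (\<lambda>(w, v, r, x). (demand w v x, (answer (query w v r) x, query w v r, w, v)))"
  have supp: "set_pmf ?P = supports K D \<times> MDS_mats L D \<times> set_pmf rho \<times> carrier_mat K N"
    using assms(2,3) by (intro set_pmf_jplt1_joint) auto
  have "finite (fst ` set_pmf (map_pmf g ?P))"
  proof (rule finite_subset)
    show "fst ` set_pmf (map_pmf g ?P)
            \<subseteq> (\<lambda>(w, v, x). demand w v x) ` (supports K D \<times> MDS_mats L D \<times> carrier_mat K N)"
    proof
      fix d assume "d \<in> fst ` set_pmf (map_pmf g ?P)"
      then obtain w' v' r' y where el: "(w', v', r', y) \<in> set_pmf ?P" and d: "d = demand w' v' y"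
        by (auto simp: g_def)
      from el have "(w', v', y) \<in> supports K D \<times> MDS_mats L D \<times> carrier_mat K N"
        unfolding supp by simp
      with d show "d \<in> (\<lambda>(w, v, x). demand w v x) ` (supports K D \<times> MDS_mats L D \<times> carrier_mat K N)"
        by (auto intro: image_eqI[where x = "(w', v', y)"])
    qed
  qed (intro finite_imageI finite_cartesian_product finite_supports finite_MDS_mats
         finite_carrier_mat)
  moreover have "cond_entropy (map_pmf g ?P) = 0"
    using prot unfolding JPLT_I_protocol_def Let_def g_def by (rule conjunct1)
  moreover have "g (w, v, r, x) \<in> set_pmf (map_pmf g ?P)" "g (w, v, r, x') \<in> set_pmf (map_pmf g ?P)"
    unfolding set_map_pmf using assms(2-6) supp by (intro imageI; simp)+
  moreover have "snd (g (w, v, r, x)) = snd (g (w, v, r, x'))"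
    using assms(7) by (simp add: g_def)
  ultimately have "fst (g (w, v, r, x)) = fst (g (w, v, r, x'))"
    by (rule fst_determined_if_cond_entropy_eq_0)
  then show ?thesis
    by (simp add: g_def)
qed

lemma JPLT_I_cond_entropy_demand_given_query:
  fixes query :: "nat set \<Rightarrow> ('f::{finite,field}) mat \<Rightarrow> 'r \<Rightarrow> 'q"
  assumes prot: "JPLT_I_protocol K N D L rho query answer"
    and pos: "measure_pmf.prob (jplt1_joint K N D L rho) {(w,v,r,x). query w v r = qq} > 0"
    and Wt: "Wt \<in> supports K D" and Vt: "Vt \<in> MDS_mats L D" and r: "r \<in> set_pmf rho"
    and qq: "query Wt Vt r = qq"
  shows "cond_entropy (map_pmf (\<lambda>(w,v,r,x). (demand Wt Vt x, answer (query w v r) x))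
           (cond_pmf (jplt1_joint K N D L rho) {(w,v,r,x). query w v r = qq})) = 0"
proof -
  let ?P = "jplt1_joint K N D L rho :: (nat set \<times> 'f mat \<times> 'r \<times> 'f mat) pmf"
  let ?Q = "{(w,v,r,x). query w v r = qq}"
  define Z where "Z = map_pmf (\<lambda>(w,v,r,x). (demand Wt Vt x, answer (query w v r) x)) (cond_pmf ?P ?Q)"
  have supp: "set_pmf ?P = supports K D \<times> MDS_mats L D \<times> set_pmf rho \<times> carrier_mat K N"
    using Wt Vt by (intro set_pmf_jplt1_joint) auto
  have "set_pmf ?P \<inter> ?Q \<noteq> {}"
    using pos by (metis measure_pmf_zero_iff less_irrefl)
  then have supp_cond: "set_pmf (cond_pmf ?P ?Q) = set_pmf ?P \<inter> ?Q"
    by (rule set_cond_pmf)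
  have elem: "\<exists>x \<in> carrier_mat K N. zy = (demand Wt Vt x, answer qq x)" if "zy \<in> set_pmf Z" for zy
  proof -
    from that obtain w v r x where "(w, v, r, x) \<in> set_pmf ?P" "query w v r = qq"
      and "zy = (demand Wt Vt x, answer (query w v r) x)"
      unfolding Z_def set_map_pmf supp_cond by auto
    then show ?thesis
      unfolding supp by auto
  qed
  have "cond_entropy Z = 0"
  proof (rule cond_entropy_eq_0_if_fst_determined)
    fix a b
    assume a: "a \<in> set_pmf Z" and b: "b \<in> set_pmf Z" and snd_eq: "snd a = snd b"
    obtain x where x: "x \<in> carrier_mat K N" and a_eq: "a = (demand Wt Vt x, answer qq x)"
      using elem[OF a] ..
    obtain x' where x': "x' \<in> carrier_mat K N" and b_eq: "b = (demand Wt Vt x', answer qq x')"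
      using elem[OF b] ..
    have "answer (query Wt Vt r) x = answer (query Wt Vt r) x'"
      using snd_eq unfolding a_eq b_eq qq by simp
    then have "demand Wt Vt x = demand Wt Vt x'"
      by (rule JPLT_I_answer_determines_demand[OF prot Wt Vt r x x'])
    then show "fst a = fst b"
      unfolding a_eq b_eq by simp
  qed
  then show ?thesis
    unfolding Z_def .
qed

theorem lemma1:
  fixes K N D L :: nat
    and rho :: "'r pmf"
    and query :: "nat set \<Rightarrow> ('f::{finite,field}) mat \<Rightarrow> 'r \<Rightarrow> 'q"
    and answer :: "'q \<Rightarrow> 'f mat \<Rightarrow> 'a"
  assumes "1 \<le> N" and "1 \<le> L" and "L \<le> D" and "D \<le> K"
    and "MDS_mats L D \<noteq> ({} :: 'f mat set)"
    and "JPLT_I_protocol K N D L rho query answer"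
    and "measure_pmf.prob (jplt1_joint K N D L rho) {(w,v,r,x). query w v r = qq} > 0"
    and "Wt \<in> supports K D"
  shows "\<exists>Vt \<in> MDS_mats L D.
           cond_entropy (map_pmf (\<lambda>(w,v,r,x). (demand Wt Vt x, answer (query w v r) x))
              (cond_pmf (jplt1_joint K N D L rho) {(w,v,r,x). query w v r = qq})) = 0"
proof -
  obtain Vt r where "Vt \<in> MDS_mats L D" "r \<in> set_pmf rho" "query Wt Vt r = qq"
    using JPLT_I_query_producible_with_support[OF assms(6,4,5,7,8)] .
  with assms(6-8) show ?thesis
    by (blast intro: JPLT_I_cond_entropy_demand_given_query)
qed

end
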